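(* In the isotropic setting below, fix $r>0$, $F\in\mathrm{GL}^+(3)$, $C_p\in\mathrm{PSym}(3)$, and let $U_p=\sqrt{C_p}$, $\varphi:=\sqrt{\mathrm{tr}[(\mathrm{dev}_3\widetilde\Sigma)^2]}$ (well defined, since $\mathrm{tr}[(\mathrm{dev}_3\widetilde\Sigma)^2]\ge0$). Define the Helm admissible set $\mathcal H_r:=\{0\}$ if $\varphi<r$, $\mathcal H_r:=\{-\lambda\,C_p^{-1}\mathrm{dev}_3\widetilde\Sigma/\varphi:\lambda\ge0\}$ if $\varphi=r$, $\mathcal H_r:=\emptyset$ if $\varphi>r$. Then $$\mathcal H_r=-U_p^{-1}\,\mathcal N_r(\mathring\Sigma)\,U_p^{-1}.$$ Equivalently, with $Z=\frac{d}{dt}[C_p^{-1}]$ and $\frac{d}{dt}[C_p]=-C_pZC_p$, the Helm flow rule $\frac{d}{dt}[C_p]=\lambda\,\frac{\mathrm{dev}_3\widetilde\Sigma}{\varphi}\,C_p$ (with $\lambda\ge0$, $\varphi\le r$, $\lambda(\varphi-r)=0$) holds if and only if the Grandi–Stefanelli flow rule $\sqrt{C_p}\,\frac{d}{dt}[C_p^{-1}]\sqrt{C_p}\in-\mathcal N_r(\mathring\Sigma)$ holds; hence in the isotropic case it is also equivalent to the Lion flow rule.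
   Context: $W$ objective and isotropic, written $W(F_e)=\Psi(I_1(C_e),I_2(C_e),I_3(C_e))$ with $\Psi\in C^1$; $\widetilde W(X)=\Psi(\mathrm{tr}X,\mathrm{tr}(\mathrm{Cof}X),\det X)$. $C=F^TF$. $\langle X,Y\rangle=\mathrm{tr}(XY^T)$, $\|\cdot\|$ Frobenius norm, $D$ gradient, $\mathrm{dev}_3X=X-\frac13\mathrm{tr}(X)\mathbb{1}$, $\mathrm{sym}X=\frac12(X+X^T)$. $\widetilde\Sigma:=2\,C\,D\widetilde W(CC_p^{-1})\,C_p^{-1}$ (not symmetric in general). $\mathring\Sigma:=2\,U_p^{-1}\mathrm{sym}[C\,D\widetilde W(CC_p^{-1})]U_p^{-1}$. For symmetric $S$: $\mathcal N_r(S)=\{0\}$ if $\|\mathrm{dev}_3S\|<r$, $\{\lambda\,\mathrm{dev}_3S/\|\mathrm{dev}_3S\|:\lambda\ge0\}$ if $\|\mathrm{dev}_3S\|=r$, $\emptyset$ if $\|\mathrm{dev}_3S\|>r$. $M\mathcal AN=\{MXN:X\in\mathcal A\}$. The Lion flow rule is $\frac{d}{dt}[C_p^{-1}]\in-F_p^{-1}\mathcal N_r(\Sigma_e)F_p^{-T}$ with $\Sigma_e=F_e^TDW(F_e)$, $F_e=FF_p^{-1}$, $C_p=F_p^TF_p$. *)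

theory Defs
  imports "HOL-Analysis.Analysis"
begin

type_synonym mat3 = "real^3^3"

definition PSym3 :: "mat3 set" where
  "PSym3 = {C. transpose C = C \<and> (\<forall>x::real^3. x \<noteq> 0 \<longrightarrow> x \<bullet> (C *v x) > 0)}"

definition GLplus3 :: "mat3 set" where
  "GLplus3 = {F. det F > 0}"

definition msqrt :: "mat3 \<Rightarrow> mat3" where
  "msqrt C = (THE U. U \<in> PSym3 \<and> U ** U = C)"

text \<open>Cofactor matrix of a 3x3 matrix (indices in type 3 are taken mod 3).\<close>
definition Cof :: "mat3 \<Rightarrow> mat3" where
  "Cof X = (\<chi> i j. X$(i+1)$(j+1) * X$(i+2)$(j+2) - X$(i+1)$(j+2) * X$(i+2)$(j+1))"

definition dev3 :: "mat3 \<Rightarrow> mat3" where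
  "dev3 X = X - (trace X / 3) *\<^sub>R mat 1"

definition msym :: "mat3 \<Rightarrow> mat3" where
  "msym X = (1/2) *\<^sub>R (X + transpose X)"

text \<open>Gradient w.r.t. the Frobenius inner product; on real^3^3 the inner product
  is the sum of entrywise products, i.e. tr(X Y^T).\<close>
definition Dgrad :: "(mat3 \<Rightarrow> real) \<Rightarrow> mat3 \<Rightarrow> mat3" where
  "Dgrad f X = (THE G. (f has_derivative (\<lambda>H. G \<bullet> H)) (at X))"

definition Wtilde :: "(real^3 \<Rightarrow> real) \<Rightarrow> mat3 \<Rightarrow> real" where
  "Wtilde \<Psi> X = \<Psi> (vector [trace X, trace (Cof X), det X])"

definition C1_on :: "(real^3) set \<Rightarrow> (real^3 \<Rightarrow> real) \<Rightarrow> bool" where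
  "C1_on S \<Psi> \<longleftrightarrow> (\<exists>g. continuous_on S g \<and> (\<forall>x\<in>S. (\<Psi> has_derivative (\<lambda>h. g x \<bullet> h)) (at x)))"

definition SigmaT :: "(real^3 \<Rightarrow> real) \<Rightarrow> mat3 \<Rightarrow> mat3 \<Rightarrow> mat3" where
  "SigmaT \<Psi> C Cp = 2 *\<^sub>R (C ** Dgrad (Wtilde \<Psi>) (C ** matrix_inv Cp) ** matrix_inv Cp)"

definition SigmaR :: "(real^3 \<Rightarrow> real) \<Rightarrow> mat3 \<Rightarrow> mat3 \<Rightarrow> mat3" where
  "SigmaR \<Psi> C Cp = 2 *\<^sub>R (matrix_inv (msqrt Cp) ** msym (C ** Dgrad (Wtilde \<Psi>) (C ** matrix_inv Cp))
                       ** matrix_inv (msqrt Cp))"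

definition Ncone :: "real \<Rightarrow> mat3 \<Rightarrow> mat3 set" where
  "Ncone r S =
     (if norm (dev3 S) < r then {0}
      else if norm (dev3 S) = r then {l *\<^sub>R (dev3 S /\<^sub>R norm (dev3 S)) | l. l \<ge> 0}
      else {})"

definition phiH :: "(real^3 \<Rightarrow> real) \<Rightarrow> mat3 \<Rightarrow> mat3 \<Rightarrow> real" where
  "phiH \<Psi> C Cp = sqrt (trace (dev3 (SigmaT \<Psi> C Cp) ** dev3 (SigmaT \<Psi> C Cp)))"

definition Helm :: "real \<Rightarrow> (real^3 \<Rightarrow> real) \<Rightarrow> mat3 \<Rightarrow> mat3 \<Rightarrow> mat3 set" where
  "Helm r \<Psi> C Cp =
     (let \<phi> = phiH \<Psi> C Cp in
      if \<phi> < r then {0}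
      else if \<phi> = r then
        {- (l *\<^sub>R (matrix_inv Cp ** dev3 (SigmaT \<Psi> C Cp) /\<^sub>R \<phi>)) | l. l \<ge> 0}
      else {})"

end

theory Submission
  imports Defs
begin

(* Write Up = sqrt Cp, X = C Cp^-1 and K = C DW~(X).  For an isotropic energy the chain
   rule through the invariants (tr X, tr Cof X, det X) shows that DW~(X) is a combination of
   1, (tr X) 1 - X^T and Cof X = det X C^-1 Cp; hence K is a combination of C, C Cp^-1 C and Cp
   and is symmetric.  The symmetrisation in Sigma-ring is then redundant, and
   Sigma-ring = 2 Up^-1 K Up^-1 = Up^-1 Sigma-tilde Up is similar to Sigma-tilde.  Similarity
   preserves the trace, so dev Sigma-ring = Up^-1 (dev Sigma-tilde) Up; consequently
   |dev Sigma-ring| = sqrt(tr (dev Sigma-tilde)^2) = phi and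
   Up^-1 (dev Sigma-ring) Up^-1 = Cp^-1 dev Sigma-tilde, which matches the two admissible sets
   case by case. *)

lemma matrix_mult_diff_left: "(A::real^'n^'n) ** (B - C) = A ** B - A ** C"
  by (simp add: vec_eq_iff matrix_matrix_mult_def sum_subtractf right_diff_distrib)

lemma matrix_mult_diff_right: "((A::real^'n^'n) - B) ** C = A ** C - B ** C"
  by (simp add: vec_eq_iff matrix_matrix_mult_def sum_subtractf left_diff_distrib)

lemma matrix_mult_scaleR_left: "(c *\<^sub>R (A::real^'n^'n)) ** B = c *\<^sub>R (A ** B)"
  by (simp add: scalar_matrix_assoc)

lemma matrix_mult_scaleR_right: "(A::real^'n^'n) ** (c *\<^sub>R B) = c *\<^sub>R (A ** B)"
  by (simp add: matrix_scalar_ac scalar_matrix_assoc)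

lemma transpose_add: "transpose ((A::real^'n^'n) + B) = transpose A + transpose B"
  by (simp add: transpose_def vec_eq_iff)

lemma transpose_diff: "transpose ((A::real^'n^'n) - B) = transpose A - transpose B"
  by (simp add: transpose_def vec_eq_iff)

lemma trace_scaleR: "trace (c *\<^sub>R (A::real^'n^'n)) = c * trace A"
  by (simp add: trace_def sum_distrib_left)

lemma inner_matrix_vector: "x \<bullet> ((M::real^'n^'n) *v y) = (transpose M *v x) \<bullet> y"
  by (metis dot_lmul_matrix transpose_transpose vector_transpose_matrix)

lemma inner_self_symmetric:
  assumes "transpose (M::real^'n^'n) = M"
  shows "M \<bullet> M = trace (M ** M)"
proof -
  have "M$j$i = M$i$j" for i j
    by (metis assms transpose_def vec_lambda_beta)
  then show ?thesis
    by (simp add: trace_def matrix_matrix_mult_def inner_vec_def)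
qed

lemma matrix_inv_left_right:
  fixes A :: "real^'n^'n"
  assumes "invertible A"
  shows "A ** matrix_inv A = mat 1" "matrix_inv A ** A = mat 1"
proof -
  have "\<exists>A'. A ** A' = mat 1 \<and> A' ** A = mat 1" using assms unfolding invertible_def by blast
  from someI_ex[OF this] show "A ** matrix_inv A = mat 1" "matrix_inv A ** A = mat 1"
    unfolding matrix_inv_def by auto
qed

lemma matrix_inv_eq:
  fixes A B :: "real^'n^'n"
  assumes "A ** B = mat 1"
  shows "matrix_inv A = B"
proof -
  have inv: "invertible A" using assms invertible_right_inverse by blast
  have "matrix_inv A = matrix_inv A ** (A ** B)" using assms by simp
  also have "\<dots> = B" using matrix_inv_left_right(2)[OF inv] by (simp add: matrix_mul_assoc)
  finally show ?thesis .
qed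

lemma matrix_inv_invertible: "invertible (A::real^'n^'n) \<Longrightarrow> invertible (matrix_inv A)"
  by (meson matrix_inv_left_right invertible_def)

lemma matrix_inv_inv: "invertible (A::real^'n^'n) \<Longrightarrow> matrix_inv (matrix_inv A) = A"
  by (rule matrix_inv_eq) (rule matrix_inv_left_right(2))

lemma matrix_inv_symmetric:
  assumes "invertible (A::real^'n^'n)" "transpose A = A"
  shows "transpose (matrix_inv A) = matrix_inv A"
proof -
  have "A ** transpose (matrix_inv A) = mat 1"
    by (metis assms matrix_inv_left_right(2) matrix_transpose_mul transpose_mat)
  then show ?thesis using matrix_inv_eq by metis
qed

lemma matrix_inv_mult:
  fixes A B :: "real^'n^'n"
  assumes "invertible A" "invertible B"
  shows "matrix_inv (A ** B) = matrix_inv B ** matrix_inv A"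
proof (rule matrix_inv_eq)
  have "A ** B ** (matrix_inv B ** matrix_inv A) = A ** (B ** matrix_inv B) ** matrix_inv A"
    by (simp add: matrix_mul_assoc)
  then show "A ** B ** (matrix_inv B ** matrix_inv A) = mat 1"
    using matrix_inv_left_right[OF assms(1)] matrix_inv_left_right[OF assms(2)] by simp
qed

definition PD :: "real^'n^'n \<Rightarrow> bool" where
  "PD M \<longleftrightarrow> (\<forall>x. x \<noteq> 0 \<longrightarrow> x \<bullet> (M *v x) > 0)"

lemma PSym3_iff: "C \<in> PSym3 \<longleftrightarrow> transpose C = C \<and> PD C"
  by (simp add: PSym3_def PD_def)

lemma PD_invertible: "PD (M::real^'n^'n) \<Longrightarrow> invertible M"
  unfolding PD_def invertible_left_inverse matrix_left_invertible_ker
  by (metis inner_zero_right less_irrefl)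

lemma PD_congruence:
  assumes "PD (M::real^'n^'n)" "invertible (P::real^'n^'n)"
  shows "PD (transpose P ** M ** P)"
  unfolding PD_def
proof (intro allI impI)
  fix x :: "real^'n" assume "x \<noteq> 0"
  then have "P *v x \<noteq> 0"
    using assms(2) inj_matrix_vector_mult[of P] by (metis injD matrix_vector_mult_0_right)
  then have "(P *v x) \<bullet> (M *v (P *v x)) > 0" using assms(1) unfolding PD_def by blast
  moreover have "x \<bullet> ((transpose P ** M ** P) *v x) = (P *v x) \<bullet> (M *v (P *v x))"
    by (simp only: inner_matrix_vector transpose_transpose matrix_vector_mul_assoc[symmetric])
  ultimately show "x \<bullet> ((transpose P ** M ** P) *v x) > 0" by simp
qed

lemma PD_matrix_inv:
  assumes "PD (M::real^'n^'n)" "transpose M = M"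
  shows "PD (matrix_inv M)"
proof -
  have inv: "invertible M" using PD_invertible assms(1) by blast
  have "transpose (matrix_inv M) ** M ** matrix_inv M = matrix_inv M"
    using matrix_inv_left_right[OF inv] matrix_inv_symmetric[OF inv assms(2)]
    by (metis matrix_mul_lid)
  with PD_congruence[OF assms(1) matrix_inv_invertible[OF inv]] show ?thesis by simp
qed

lemma PSym3_matrix_inv: "C \<in> PSym3 \<Longrightarrow> matrix_inv C \<in> PSym3"
  by (simp add: PSym3_iff PD_matrix_inv matrix_inv_symmetric PD_invertible)

lemma Cauchy_Green_PSym3: assumes "F \<in> GLplus3" shows "transpose F ** F \<in> PSym3"
proof -
  have "invertible F" using assms by (simp add: GLplus3_def invertible_det_nz)
  from PD_congruence[OF _ this, of "mat 1"] have "PD (transpose F ** F)" by (simp add: PD_def)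
  then show ?thesis by (simp add: PSym3_iff matrix_transpose_mul)
qed

text \<open>The diagonal entries, hence the trace, of a positive definite matrix are positive.\<close>
lemma trace_PD_pos: assumes "PD (M::real^'n^'n)" shows "trace M > 0"
proof -
  have "M$i$i > 0" for i
  proof -
    have "axis i 1 \<noteq> (0::real^'n)" by (simp add: axis_eq_0_iff)
    then have "axis i 1 \<bullet> (M *v axis i 1) > 0" using assms unfolding PD_def by blast
    then show "M$i$i > 0" by (simp only: inner_axis' matrix_vector_mult_basis) (simp add: column_def)
  qed
  then show ?thesis unfolding trace_def by (simp add: sum_pos)
qed

section \<open>Spectral theorem for symmetric 3x3 matrices\<close>

lemma quadratic_nonpos_linear_coeff_zero:
  fixes b c :: real
  assumes "\<And>t. 2 * b * t + c * t^2 \<le> 0"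
  shows "b = 0"
proof (rule ccontr)
  assume b: "b \<noteq> 0"
  define e where "e = 1 / (\<bar>c\<bar> + 1)"
  have e: "e > 0" unfolding e_def by (simp add: add_pos_nonneg)
  have "\<bar>c\<bar> * e < 1" unfolding e_def by (simp add: divide_less_eq)
  then have "\<bar>c * e\<bar> < 1" using e by (simp add: abs_mult)
  then have ce: "1 + c * e > 0" by (simp add: abs_less_iff)
  have "2 * b * (b*e) + c * (b*e)^2 = b^2 * e * (1 + (1 + c*e))"
    by (simp add: power2_eq_square algebra_simps)
  moreover have "b^2 * e * (1 + (1 + c*e)) > 0" using b e ce by simp
  ultimately show False using assms[of "b*e"] by linarith
qed

lemma quadratic_form_max_on_subspace:
  fixes A :: "real^'n^'n"
  assumes W: "subspace W" "W \<noteq> {0}"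
  shows "\<exists>v\<in>W. v \<bullet> v = 1 \<and> (\<forall>x\<in>W. x \<bullet> (A *v x) \<le> (v \<bullet> (A *v v)) * (x \<bullet> x))"
proof -
  define K where "K = sphere 0 1 \<inter> W"
  have "compact K" unfolding K_def
    by (intro compact_Int_closed compact_sphere closed_subspace W)
  moreover obtain x where "x \<in> W" "x \<noteq> 0" using W subspace_0 by blast
  then have "x /\<^sub>R norm x \<in> K" using W(1) by (simp add: K_def subspace_scale)
  then have "K \<noteq> {}" by blast
  moreover have "continuous_on K (\<lambda>x. x \<bullet> (A *v x))"
    by (intro continuous_on_inner continuous_on_id matrix_vector_mult_linear_continuous_on)
  ultimately obtain v where vK: "v \<in> K" and vmax: "\<And>y. y \<in> K \<Longrightarrow> y \<bullet> (A *v y) \<le> v \<bullet> (A *v v)"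
    using continuous_attains_sup by metis
  have "x \<bullet> (A *v x) \<le> (v \<bullet> (A *v v)) * (x \<bullet> x)" if "x \<in> W" for x
  proof (cases "x = 0")
    case False
    have "x /\<^sub>R norm x \<in> K" using False that W(1) by (simp add: K_def subspace_scale)
    then have "(x /\<^sub>R norm x) \<bullet> (A *v (x /\<^sub>R norm x)) \<le> v \<bullet> (A *v v)" by (rule vmax)
    then have "(x \<bullet> (A *v x)) / (norm x)^2 \<le> v \<bullet> (A *v v)"
      by (simp add: matrix_vector_mult_scaleR power2_eq_square divide_inverse mult_ac)
    then show ?thesis using False by (simp add: divide_le_eq power2_norm_eq_inner mult.commute)
  qed simp
  moreover have "v \<in> W" "v \<bullet> v = 1" using vK by (auto simp: K_def norm_eq_1)
  ultimately show ?thesis by blast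
qed

lemma quadratic_form_max_stationary:
  fixes A :: "real^'n^'n"
  assumes sym: "transpose A = A" and W: "subspace W" "v \<in> W" "v \<bullet> v = 1"
    and max: "\<forall>x\<in>W. x \<bullet> (A *v x) \<le> (v \<bullet> (A *v v)) * (x \<bullet> x)"
    and w: "w \<in> W"
  shows "w \<bullet> (A *v v - (v \<bullet> (A *v v)) *\<^sub>R v) = 0"
proof -
  define M where "M = v \<bullet> (A *v v)"
  have "w \<bullet> (A *v v) - M * (w \<bullet> v) = 0"
  proof (rule quadratic_nonpos_linear_coeff_zero[where c = "w \<bullet> (A *v w) - M * (w \<bullet> w)"])
    fix t :: real
    have "v + t *\<^sub>R w \<in> W" using W w by (simp add: subspace_add subspace_scale)
    then have "(v + t *\<^sub>R w) \<bullet> (A *v (v + t *\<^sub>R w)) \<le> M * ((v + t *\<^sub>R w) \<bullet> (v + t *\<^sub>R w))"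
      using max unfolding M_def by blast
    moreover have "v \<bullet> (A *v w) = w \<bullet> (A *v v)"
      using inner_matrix_vector[of v A w] sym by (simp add: inner_commute)
    ultimately show "2 * (w \<bullet> (A *v v) - M * (w \<bullet> v)) * t + (w \<bullet> (A *v w) - M * (w \<bullet> w)) * t^2 \<le> 0"
      using W(3) unfolding M_def
      by (simp add: matrix_vector_right_distrib matrix_vector_mult_scaleR inner_add_left
          inner_add_right inner_commute[of v w] power2_eq_square algebra_simps)
  qed
  then show ?thesis by (simp add: M_def inner_diff_right)
qed

lemma eigenvector_orthogonal_to:
  fixes A :: "real^'n^'n" and B :: "(real^'n) set"
  assumes sym: "transpose A = A"
    and eigB: "\<forall>u\<in>B. \<exists>\<mu>. A *v u = \<mu> *\<^sub>R u"
    and ne: "\<exists>x. x \<noteq> 0 \<and> (\<forall>u\<in>B. u \<bullet> x = 0)"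
  shows "\<exists>v \<mu>. v \<bullet> v = 1 \<and> (\<forall>u\<in>B. u \<bullet> v = 0) \<and> A *v v = \<mu> *\<^sub>R v"
proof -
  define W where "W = {x. \<forall>u\<in>B. u \<bullet> x = 0}"
  have W: "subspace W" unfolding W_def subspace_def by (simp add: inner_add_right)
  moreover have "W \<noteq> {0}" using ne unfolding W_def by blast
  ultimately obtain v where v: "v \<in> W" "v \<bullet> v = 1"
    and max: "\<forall>x\<in>W. x \<bullet> (A *v x) \<le> (v \<bullet> (A *v v)) * (x \<bullet> x)"
    using quadratic_form_max_on_subspace by blast
  define z where "z = A *v v - (v \<bullet> (A *v v)) *\<^sub>R v"
  have "z \<in> W"
    unfolding W_def
  proof (intro CollectI ballI)
    fix u assume u: "u \<in> B"
    then obtain \<mu> where Au: "A *v u = \<mu> *\<^sub>R u" using eigB by blast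
    have "u \<bullet> (A *v v) = \<mu> * (u \<bullet> v)"
      using inner_matrix_vector[of u A v] sym by (simp add: Au)
    then show "u \<bullet> z = 0" using v(1) u by (simp add: W_def z_def inner_diff_right)
  qed
  then have "z \<bullet> z = 0"
    using quadratic_form_max_stationary[OF sym W v max] unfolding z_def by blast
  then have "A *v v = (v \<bullet> (A *v v)) *\<^sub>R v" by (simp add: z_def)
  then show ?thesis using v unfolding W_def by blast
qed

lemma nonzero_orthogonal_vector:
  fixes S :: "(real^'n) set"
  assumes "finite S" "card S < CARD('n)"
  shows "\<exists>x. x \<noteq> 0 \<and> (\<forall>u\<in>S. u \<bullet> x = 0)"
proof -
  have "dim S < DIM(real^'n)" using dim_le_card[OF span_superset assms(1)] assms(2) by simp
  then obtain x :: "real^'n" where "x \<noteq> 0" "\<And>y. y \<in> span S \<Longrightarrow> orthogonal x y"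
    using orthogonal_to_subspace_exists by blast
  then show ?thesis by (metis orthogonal_def inner_commute span_base)
qed

lemma spectral3:
  fixes A :: mat3
  assumes sym: "transpose A = A"
  shows "\<exists>v::3\<Rightarrow>real^3. \<exists>\<mu>::3\<Rightarrow>real.
           (\<forall>k l. v k \<bullet> v l = (if k = l then 1 else 0)) \<and> (\<forall>k. A *v v k = \<mu> k *\<^sub>R v k)"
proof -
  obtain v1 m1 where v1: "v1 \<bullet> v1 = 1" "A *v v1 = m1 *\<^sub>R v1"
    using eigenvector_orthogonal_to[OF sym, of "{}"] nonzero_orthogonal_vector[of "{}"] by auto
  obtain v2 m2 where v2: "v2 \<bullet> v2 = 1" "v1 \<bullet> v2 = 0" "A *v v2 = m2 *\<^sub>R v2"
    using eigenvector_orthogonal_to[OF sym, of "{v1}"] nonzero_orthogonal_vector[of "{v1}"] v1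
    by auto
  have "card {v1, v2} < CARD(3)" by (simp add: card_insert_if)
  then obtain v3 m3 where v3: "v3 \<bullet> v3 = 1" "v1 \<bullet> v3 = 0" "v2 \<bullet> v3 = 0" "A *v v3 = m3 *\<^sub>R v3"
    using eigenvector_orthogonal_to[OF sym, of "{v1,v2}"] nonzero_orthogonal_vector[of "{v1,v2}"]
      v1 v2 by auto
  define v :: "3\<Rightarrow>real^3" where "v k = (if k = 1 then v1 else if k = 2 then v2 else v3)" for k
  define \<mu> :: "3\<Rightarrow>real" where "\<mu> k = (if k = 1 then m1 else if k = 2 then m2 else m3)" for k
  have "\<forall>k l. v k \<bullet> v l = (if k = l then 1 else 0)"
    using v1 v2 v3 by (simp add: forall_3 v_def inner_commute)
  moreover have "\<forall>k. A *v v k = \<mu> k *\<^sub>R v k"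
    using v1 v2 v3 by (simp add: forall_3 v_def \<mu>_def)
  ultimately show ?thesis by blast
qed

section \<open>Square roots of positive definite matrices\<close>

definition diag3 :: "(3 \<Rightarrow> real) \<Rightarrow> mat3" where
  "diag3 d = (\<chi> i j. if i = j then d i else 0)"

lemma diag3_mult: "diag3 a ** diag3 b = diag3 (\<lambda>k. a k * b k)"
  by (simp add: diag3_def matrix_matrix_mult_def vec_eq_iff sum_3 forall_3)

lemma diag3_transpose: "transpose (diag3 a) = diag3 a"
  by (simp add: diag3_def transpose_def vec_eq_iff forall_3)

lemma diag3_quadratic_form: "y \<bullet> (diag3 s *v y) = (\<Sum>k\<in>UNIV. s k * (y$k)^2)"
  by (simp add: diag3_def inner_vec_def matrix_vector_mult_def sum_3 power2_eq_square algebra_simps)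

text \<open>Existence: diagonalise C orthogonally and take square roots of the (positive) eigenvalues.\<close>
lemma PSym3_sqrt_exists:
  assumes "C \<in> PSym3"
  shows "\<exists>U. U \<in> PSym3 \<and> U ** U = C"
proof -
  have sym: "transpose C = C" and pd: "PD C" using assms by (auto simp: PSym3_iff)
  obtain v :: "3\<Rightarrow>real^3" and \<mu> where on: "\<And>k l. v k \<bullet> v l = (if k = l then 1 else 0)"
      and ev: "\<And>k. C *v v k = \<mu> k *\<^sub>R v k"
    using spectral3[OF sym] by blast
  have \<mu>_pos: "\<mu> k > 0" for k
  proof -
    have "v k \<noteq> 0" using on[of k k] by auto
    then have "v k \<bullet> (C *v v k) > 0" using pd unfolding PD_def by blast
    then show ?thesis using on[of k k] by (simp add: ev)
  qed
  define Q :: mat3 where "Q = (\<chi> i k. v k $ i)"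
  have QtQ: "transpose Q ** Q = mat 1"
    using on by (simp add: Q_def matrix_matrix_mult_def transpose_def vec_eq_iff mat_def inner_vec_def)
  then have QQt: "Q ** transpose Q = mat 1" by (simp add: matrix_left_right_inverse)
  have "(C *v v k) $ i = \<mu> k * v k $ i" for k i using ev[of k] by simp
  then have "C ** Q = Q ** diag3 \<mu>"
    by (simp add: Q_def diag3_def matrix_matrix_mult_def matrix_vector_mult_def vec_eq_iff
        sum_3 forall_3 mult.commute)
  then have C_eq: "C = Q ** diag3 \<mu> ** transpose Q"
    by (metis QQt matrix_mul_assoc matrix_mul_rid)
  define s where "s k = sqrt (\<mu> k)" for k
  have s_pos: "s k > 0" for k using \<mu>_pos by (simp add: s_def)
  define U where "U = Q ** diag3 s ** transpose Q"
  have "U ** U = Q ** diag3 s ** (transpose Q ** Q) ** diag3 s ** transpose Q"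
    by (simp add: U_def matrix_mul_assoc)
  also have "\<dots> = Q ** diag3 (\<lambda>k. s k * s k) ** transpose Q"
    by (simp add: QtQ diag3_mult[symmetric] matrix_mul_assoc)
  also have "(\<lambda>k. s k * s k) = \<mu>" using \<mu>_pos by (simp add: s_def fun_eq_iff less_imp_le)
  finally have UU: "U ** U = C" using C_eq by simp
  have Ut: "transpose U = U"
    by (simp add: U_def matrix_transpose_mul diag3_transpose matrix_mul_assoc)
  have "PD U" unfolding PD_def
  proof (intro allI impI)
    fix x :: "real^3" assume x: "x \<noteq> 0"
    define y where "y = transpose Q *v x"
    have "Q *v y = x" using QQt by (metis matrix_vector_mul_assoc matrix_vector_mul_lid y_def)
    then have "y \<noteq> 0" using x by auto
    then obtain k where k: "y $ k \<noteq> 0" by (auto simp: vec_eq_iff)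
    have "x \<bullet> (U *v x) = x \<bullet> (Q *v (diag3 s *v y))"
      unfolding U_def y_def by (simp only: matrix_vector_mul_assoc matrix_mul_assoc)
    also have "\<dots> = y \<bullet> (diag3 s *v y)" unfolding y_def by (rule inner_matrix_vector)
    also have "\<dots> = (\<Sum>k\<in>UNIV. s k * (y$k)^2)" by (rule diag3_quadratic_form)
    also have "\<dots> > 0"
      using k s_pos by (intro sum_pos2[where i = k]) (simp_all add: less_imp_le)
    finally show "x \<bullet> (U *v x) > 0" .
  qed
  then show ?thesis using UU Ut by (auto simp: PSym3_iff)
qed

text \<open>The trace of the congruence transform of a positive definite matrix is a sum of values of
  its quadratic form, so it is nonnegative and vanishes only for the zero transformation.\<close>
lemma trace_congruence_column_sum:
  "trace (transpose D ** M ** D) = (\<Sum>k\<in>UNIV. column k D \<bullet> (M *v column k (D::real^'n^'n)))"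
  unfolding trace_def matrix_matrix_mult_def transpose_def column_def inner_vec_def
    matrix_vector_mult_def
  by (simp add: sum_distrib_left sum_distrib_right mult_ac)
    (rule sum.cong[OF refl], subst sum.swap, simp add: mult_ac)

lemma trace_congruence_PD:
  fixes D M :: "real^'n^'n"
  assumes "PD M"
  shows "trace (transpose D ** M ** D) \<ge> 0"
    and "trace (transpose D ** M ** D) = 0 \<Longrightarrow> D = 0"
proof -
  have nonneg: "column k D \<bullet> (M *v column k D) \<ge> 0" for k
    using assms unfolding PD_def by (cases "column k D = 0") (auto intro: less_imp_le)
  then show "trace (transpose D ** M ** D) \<ge> 0"
    unfolding trace_congruence_column_sum by (simp add: sum_nonneg)
  assume "trace (transpose D ** M ** D) = 0"
  then have "column k D \<bullet> (M *v column k D) = 0" for k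
    unfolding trace_congruence_column_sum using nonneg by (simp add: sum_nonneg_eq_0_iff)
  then have "column k D = 0" for k using assms unfolding PD_def by (metis less_irrefl)
  then show "D = 0" by (simp add: vec_eq_iff column_def)
qed

text \<open>Uniqueness: for D = U - V one has D U + V D = 0, and taking the trace against D gives a
  sum of two nonnegative congruence traces.\<close>
lemma PSym3_sqrt_unique:
  assumes U: "U \<in> PSym3" and V: "V \<in> PSym3" and UV: "U ** U = V ** V"
  shows "U = V"
proof -
  have Us: "transpose U = U" and Upd: "PD U" and Vs: "transpose V = V" and Vpd: "PD V"
    using U V by (auto simp: PSym3_iff)
  define D where "D = U - V"
  have Ds: "transpose D = D" using Us Vs by (simp add: D_def transpose_diff)
  have "D ** U + V ** D = U ** U - V ** V"
    by (simp add: D_def matrix_mult_diff_left matrix_mult_diff_right)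
  then have "D ** U + V ** D = 0" using UV by simp
  then have "trace (D ** (D ** U + V ** D)) = 0" using trace_0 by simp
  moreover have "trace (D ** (D ** U + V ** D)) = trace (D ** U ** D) + trace (D ** V ** D)"
    using trace_mul_sym[of D "D ** U"] by (simp add: matrix_add_ldistrib trace_add matrix_mul_assoc)
  moreover have "trace (D ** U ** D) \<ge> 0" "trace (D ** V ** D) \<ge> 0"
    using trace_congruence_PD(1)[OF Upd, of D] trace_congruence_PD(1)[OF Vpd, of D] Ds by simp_all
  ultimately have "trace (transpose D ** V ** D) = 0" unfolding Ds by linarith
  then have "D = 0" using trace_congruence_PD(2)[OF Vpd] by blast
  then show ?thesis by (simp add: D_def)
qed

lemma msqrt_PSym3:
  assumes "C \<in> PSym3"
  shows "msqrt C \<in> PSym3" "msqrt C ** msqrt C = C"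
proof -
  have "\<exists>!U. U \<in> PSym3 \<and> U ** U = C"
    using PSym3_sqrt_exists[OF assms] PSym3_sqrt_unique by metis
  from theI'[OF this] show "msqrt C \<in> PSym3" "msqrt C ** msqrt C = C"
    unfolding msqrt_def by auto
qed

text \<open>det C = (det (msqrt C))^2 with msqrt C invertible.\<close>
lemma det_PSym3_pos: assumes "C \<in> PSym3" shows "det C > 0"
proof -
  have "invertible (msqrt C)" using msqrt_PSym3(1)[OF assms] PD_invertible by (auto simp: PSym3_iff)
  then have "det (msqrt C) \<noteq> 0" by (simp add: invertible_det_nz)
  moreover have "det C = det (msqrt C) * det (msqrt C)" using msqrt_PSym3(2)[OF assms] det_mul by metis
  ultimately show ?thesis by (metis not_real_square_gt_zero)
qed

text \<open>The product of two symmetric positive definite matrices has positive trace: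
  tr(A B) = tr(U A U) with U the square root of B.\<close>
lemma trace_PSym3_mult_pos:
  assumes "A \<in> PSym3" "B \<in> PSym3"
  shows "trace (A ** B) > 0"
proof -
  define U where "U = msqrt B"
  have U: "transpose U = U" "PD U" "U ** U = B" using msqrt_PSym3[OF assms(2)] by (auto simp: U_def PSym3_iff)
  have "trace (A ** B) = trace (transpose U ** A ** U)"
    using U by (metis matrix_mul_assoc trace_mul_sym)
  also have "\<dots> > 0"
    using assms(1) U by (intro trace_PD_pos PD_congruence PD_invertible) (auto simp: PSym3_iff)
  finally show ?thesis .
qed

section \<open>Gradient of an isotropic energy\<close>

lemma inner_mat3: "(A::mat3) \<bullet> B = (\<Sum>i\<in>UNIV. \<Sum>j\<in>UNIV. A$i$j * B$i$j)"
  by (simp add: inner_vec_def)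

lemma trace_as_inner: "trace (H::mat3) = mat 1 \<bullet> H"
  by (simp add: inner_mat3 trace_def mat_def sum_3)

lemma mat3_entry_has_derivative [derivative_intros]:
  "((\<lambda>X::mat3. X$i$j) has_derivative (\<lambda>H. H$i$j)) F"
proof -
  have "bounded_linear (\<lambda>X::mat3. X$i$j)"
    by (rule bounded_linear_compose[of "\<lambda>x::real^3. x$j" "\<lambda>x::mat3. x$i"]) auto
  then show ?thesis by (rule bounded_linear_imp_has_derivative)
qed

lemma index3_mod: "(4::3) = 1" "(5::3) = 2" "(6::3) = 3"
  by simp_all

lemma transpose_mult_Cof: "transpose X ** Cof X = det X *\<^sub>R (mat 1 :: mat3)"
  unfolding Cof_def det_3
  by (simp add: vec_eq_iff forall_3 matrix_matrix_mult_def transpose_def sum_3 mat_def index3_mod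
      algebra_simps)

lemma trace_has_derivative: "((\<lambda>X::mat3. trace X) has_derivative (\<lambda>H. trace H)) (at X)"
  unfolding trace_def sum_3 by (auto intro!: derivative_eq_intros)

lemma trace_Cof_has_derivative:
  "((\<lambda>X::mat3. trace (Cof X)) has_derivative (\<lambda>H. (trace X *\<^sub>R mat 1 - transpose X) \<bullet> H)) (at X)"
  unfolding trace_def sum_3 Cof_def inner_mat3
  by (auto intro!: derivative_eq_intros simp: index3_mod mat_def transpose_def sum_3 algebra_simps)

lemma det_has_derivative: "((\<lambda>X::mat3. det X) has_derivative (\<lambda>H. Cof X \<bullet> H)) (at X)"
  unfolding det_3 Cof_def inner_mat3
  by (auto intro!: derivative_eq_intros simp: index3_mod sum_3 algebra_simps)

lemma invariants_has_derivative:
  "((\<lambda>X::mat3. vector [trace X, trace (Cof X), det X] :: real^3) has_derivative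
     (\<lambda>H. vector [trace H, (trace X *\<^sub>R mat 1 - transpose X) \<bullet> H, Cof X \<bullet> H])) (at X)"
proof -
  have vec3: "vector [a, b, c] = a *\<^sub>R axis 1 1 + b *\<^sub>R axis 2 1 + c *\<^sub>R (axis 3 1 :: real^3)"
    for a b c :: real
    by (simp add: vec_eq_iff forall_3 vector_3 axis_def)
  show ?thesis unfolding vec3
    by (intro derivative_eq_intros;
        (rule trace_has_derivative trace_Cof_has_derivative det_has_derivative)?) auto
qed

lemma Dgrad_eqI:
  assumes "(f has_derivative (\<lambda>H. G \<bullet> H)) (at X)"
  shows "Dgrad f X = G"
  unfolding Dgrad_def
proof (rule the_equality)
  fix G' assume "(f has_derivative (\<lambda>H. G' \<bullet> H)) (at X)"
  from has_derivative_unique[OF this assms] have "\<And>H. G' \<bullet> H = G \<bullet> H" by metis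
  from this[of "G' - G"] have "(G' - G) \<bullet> (G' - G) = 0" by (simp add: inner_diff_left inner_commute)
  then show "G' = G" by simp
qed (rule assms)

lemma Dgrad_Wtilde:
  assumes C1: "C1_on {x. \<forall>i. 0 < x$i} \<Psi>"
    and pos: "trace X > 0" "trace (Cof X) > 0" "det X > 0"
  shows "\<exists>a b c. Dgrad (Wtilde \<Psi>) X = a *\<^sub>R mat 1 + b *\<^sub>R (trace X *\<^sub>R mat 1 - transpose X) + c *\<^sub>R Cof X"
proof -
  define p :: "real^3" where "p = vector [trace X, trace (Cof X), det X]"
  obtain g where g: "\<forall>x\<in>{x. \<forall>i. 0 < x$i}. (\<Psi> has_derivative (\<lambda>h. g x \<bullet> h)) (at x)"
    using C1 unfolding C1_on_def by blast
  have "p \<in> {x. \<forall>i. 0 < x$i}" using pos by (simp add: p_def forall_3 vector_3)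
  with g have dP: "(\<Psi> has_derivative (\<lambda>h. g p \<bullet> h)) (at p)" by blast
  define G where "G = (g p $ 1) *\<^sub>R mat 1 + (g p $ 2) *\<^sub>R (trace X *\<^sub>R mat 1 - transpose X)
                      + (g p $ 3) *\<^sub>R Cof X"
  have "(\<Psi> \<circ> (\<lambda>X::mat3. vector [trace X, trace (Cof X), det X] :: real^3) has_derivative
      (\<lambda>h. g p \<bullet> h) \<circ> (\<lambda>H. vector [trace H, (trace X *\<^sub>R mat 1 - transpose X) \<bullet> H, Cof X \<bullet> H])) (at X)"
    by (rule diff_chain_at[OF invariants_has_derivative]) (use dP p_def in simp)
  moreover have "\<Psi> \<circ> (\<lambda>X::mat3. vector [trace X, trace (Cof X), det X] :: real^3) = Wtilde \<Psi>"
    by (simp add: fun_eq_iff Wtilde_def)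
  moreover have "(\<lambda>h. g p \<bullet> h) \<circ> (\<lambda>H. vector [trace H, (trace X *\<^sub>R mat 1 - transpose X) \<bullet> H, Cof X \<bullet> H])
      = (\<lambda>H. G \<bullet> H)"
    by (simp add: fun_eq_iff G_def inner_vec_def sum_3 vector_3 trace_as_inner inner_add_left
        algebra_simps)
  ultimately have "Dgrad (Wtilde \<Psi>) X = G" by (intro Dgrad_eqI) simp
  then show ?thesis unfolding G_def by blast
qed

section \<open>Stress tensors in the isotropic case\<close>

lemma invariants_pos:
  assumes C: "C \<in> PSym3" and Cp: "Cp \<in> PSym3"
  defines "X \<equiv> C ** matrix_inv Cp"
  shows "trace X > 0" "det X > 0" "Cof X = det X *\<^sub>R (matrix_inv C ** Cp)" "trace (Cof X) > 0"
proof -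
  have Ci: "matrix_inv Cp \<in> PSym3" and Cinv: "matrix_inv C \<in> PSym3"
    using C Cp by (simp_all add: PSym3_matrix_inv)
  have invC: "invertible C" and invCp: "invertible Cp" and invCi: "invertible (matrix_inv Cp)"
    using C Cp Ci by (auto simp: PSym3_iff PD_invertible)
  show "trace X > 0" unfolding X_def using trace_PSym3_mult_pos[OF C Ci] .
  show detX: "det X > 0" unfolding X_def using det_PSym3_pos[OF C] det_PSym3_pos[OF Ci]
    by (simp add: det_mul)
  have XT: "transpose X = matrix_inv Cp ** C"
    using C Ci by (simp add: X_def matrix_transpose_mul PSym3_iff)
  have "invertible (transpose X)" using invC invCi XT by (simp add: invertible_mult)
  then have "Cof X = matrix_inv (transpose X) ** (transpose X ** Cof X)"
    by (metis matrix_mul_assoc matrix_inv_left_right(2) matrix_mul_lid)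
  also have "\<dots> = det X *\<^sub>R matrix_inv (transpose X)"
    by (simp add: transpose_mult_Cof matrix_mult_scaleR_right)
  also have "matrix_inv (transpose X) = matrix_inv C ** Cp"
    by (simp add: XT matrix_inv_mult invCi invC matrix_inv_inv invCp)
  finally show CofX: "Cof X = det X *\<^sub>R (matrix_inv C ** Cp)" .
  show "trace (Cof X) > 0"
    unfolding CofX trace_scaleR using detX trace_PSym3_mult_pos[OF Cinv Cp] by simp
qed

text \<open>Isotropy makes the Kirchhoff-type stress C DW~(C Cp^-1) symmetric: it is a combination of
  C, C Cp^-1 C and Cp, so the symmetrisation in the definition of Sigma-ring is redundant.\<close>
lemma isotropic_stress_symmetric:
  assumes C1: "C1_on {x. \<forall>i. 0 < x$i} \<Psi>" and C: "C \<in> PSym3" and Cp: "Cp \<in> PSym3"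
  defines "K \<equiv> C ** Dgrad (Wtilde \<Psi>) (C ** matrix_inv Cp)"
  shows "transpose K = K"
proof -
  define X where "X = C ** matrix_inv Cp"
  note pos = invariants_pos[OF C Cp, folded X_def]
  obtain a b c where G: "Dgrad (Wtilde \<Psi>) X
      = a *\<^sub>R mat 1 + b *\<^sub>R (trace X *\<^sub>R mat 1 - transpose X) + c *\<^sub>R Cof X"
    using Dgrad_Wtilde[OF C1 pos(1) pos(4) pos(2)] by blast
  have Cs: "transpose C = C" and Cis: "transpose (matrix_inv Cp) = matrix_inv Cp"
    and Cps: "transpose Cp = Cp" and invC: "invertible C"
    using C Cp PSym3_matrix_inv[OF Cp] by (auto simp: PSym3_iff PD_invertible)
  have "K = a *\<^sub>R C + b *\<^sub>R (trace X *\<^sub>R C - C ** matrix_inv Cp ** C) + (c * det X) *\<^sub>R Cp"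
    unfolding K_def X_def[symmetric] G pos(3)
    by (simp add: matrix_add_ldistrib matrix_mult_diff_left matrix_mult_scaleR_right
        matrix_transpose_mul X_def Cs Cis matrix_mul_assoc matrix_inv_left_right(1)[OF invC])
  then show ?thesis
    by (simp add: transpose_add transpose_diff transpose_scalar matrix_transpose_mul Cs Cis Cps
        matrix_mul_assoc)
qed

text \<open>The deviatoric part commutes with similarity transformations, since these preserve the trace.\<close>
lemma dev3_similar:
  assumes "invertible (P::mat3)"
  shows "dev3 (matrix_inv P ** S ** P) = matrix_inv P ** dev3 S ** P"
proof -
  have "trace (matrix_inv P ** S ** P) = trace S"
    using assms by (metis matrix_inv_left_right(1) matrix_mul_assoc matrix_mul_lid trace_mul_sym)
  then show ?thesis
    using assms unfolding dev3_def
    by (simp add: matrix_mult_diff_left matrix_mult_diff_right matrix_mult_scaleR_left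
        matrix_mult_scaleR_right matrix_inv_left_right(2))
qed

text \<open>With Up = sqrt Cp and symmetric Kirchhoff stress K:  Sigma-ring = 2 Up^-1 K Up^-1 is
  symmetric and similar to Sigma-tilde = 2 K Cp^-1 = 2 K Up^-1 Up^-1.\<close>
lemma SigmaR_similar_SigmaT:
  assumes C1: "C1_on {x. \<forall>i. 0 < x$i} \<Psi>" and C: "C \<in> PSym3" and Cp: "Cp \<in> PSym3"
  defines "Ui \<equiv> matrix_inv (msqrt Cp)"
  shows "SigmaR \<Psi> C Cp = Ui ** SigmaT \<Psi> C Cp ** msqrt Cp"
    and "transpose (SigmaR \<Psi> C Cp) = SigmaR \<Psi> C Cp"
    and "matrix_inv Cp = Ui ** Ui"
proof -
  define K where "K = C ** Dgrad (Wtilde \<Psi>) (C ** matrix_inv Cp)"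
  have Ks: "transpose K = K" unfolding K_def by (rule isotropic_stress_symmetric[OF C1 C Cp])
  then have "msym K = K" by (simp add: msym_def scaleR_2[symmetric])
  then have SR: "SigmaR \<Psi> C Cp = 2 *\<^sub>R (Ui ** K ** Ui)"
    unfolding SigmaR_def K_def Ui_def by simp
  have U: "transpose (msqrt Cp) = msqrt Cp" "invertible (msqrt Cp)" "msqrt Cp ** msqrt Cp = Cp"
    using msqrt_PSym3[OF Cp] by (auto simp: PSym3_iff PD_invertible)
  show Ci: "matrix_inv Cp = Ui ** Ui"
    unfolding Ui_def using matrix_inv_mult[OF U(2) U(2)] U(3) by simp
  have UiU: "M ** Ui ** msqrt Cp = M" for M
    unfolding Ui_def using U(2) by (metis matrix_inv_left_right(2) matrix_mul_assoc matrix_mul_rid)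
  have "SigmaT \<Psi> C Cp = 2 *\<^sub>R (K ** matrix_inv Cp)"
    unfolding SigmaT_def K_def ..
  then show "SigmaR \<Psi> C Cp = Ui ** SigmaT \<Psi> C Cp ** msqrt Cp"
    unfolding SR Ci
    by (simp add: matrix_mult_scaleR_left matrix_mult_scaleR_right matrix_mul_assoc UiU)
  have "transpose Ui = Ui" unfolding Ui_def using matrix_inv_symmetric U by blast
  then show "transpose (SigmaR \<Psi> C Cp) = SigmaR \<Psi> C Cp"
    unfolding SR by (simp add: transpose_scalar matrix_transpose_mul Ks matrix_mul_assoc)
qed

lemma deviatoric_stress_relations:
  assumes C1: "C1_on {x. \<forall>i. 0 < x$i} \<Psi>" and C: "C \<in> PSym3" and Cp: "Cp \<in> PSym3"
  defines "Ui \<equiv> matrix_inv (msqrt Cp)"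
  shows "norm (dev3 (SigmaR \<Psi> C Cp)) = phiH \<Psi> C Cp"
    and "Ui ** dev3 (SigmaR \<Psi> C Cp) ** Ui = matrix_inv Cp ** dev3 (SigmaT \<Psi> C Cp)"
proof -
  define DT where "DT = dev3 (SigmaT \<Psi> C Cp)"
  define DR where "DR = dev3 (SigmaR \<Psi> C Cp)"
  note sim = SigmaR_similar_SigmaT[OF C1 C Cp, folded Ui_def]
  have U: "invertible (msqrt Cp)" using msqrt_PSym3[OF Cp] by (auto simp: PSym3_iff PD_invertible)
  have UUi: "M ** msqrt Cp ** Ui = M" for M
    unfolding Ui_def using U by (metis matrix_inv_left_right(1) matrix_mul_assoc matrix_mul_rid)
  have DR: "DR = Ui ** DT ** msqrt Cp"
    unfolding DR_def DT_def sim(1) Ui_def by (rule dev3_similar[OF U])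
  have "transpose DR = DR"
    unfolding DR_def dev3_def by (simp add: transpose_diff transpose_scalar sim(2))
  then have "norm DR = sqrt (trace (DR ** DR))"
    by (simp add: norm_eq_sqrt_inner inner_self_symmetric)
  also have "trace (DR ** DR) = trace (Ui ** (DT ** DT ** msqrt Cp))"
    unfolding DR by (simp add: matrix_mul_assoc UUi)
  also have "\<dots> = trace (DT ** DT)"
    using UUi[of "DT ** DT"] by (metis matrix_mul_assoc trace_mul_sym)
  finally show "norm DR = phiH \<Psi> C Cp" unfolding phiH_def DT_def .
  show "Ui ** DR ** Ui = matrix_inv Cp ** DT"
    unfolding DR sim(3) by (simp add: matrix_mul_assoc UUi)
qed

lemma Helm_eq_image_Ncone:
  assumes norm: "norm (dev3 S) = phiH \<Psi> C Cp"
    and conj: "U ** dev3 S ** U = matrix_inv Cp ** dev3 (SigmaT \<Psi> C Cp)"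
  shows "Helm r \<Psi> C Cp = (\<lambda>X. - (U ** X ** U)) ` Ncone r S"
proof -
  have ray: "- (U ** (l *\<^sub>R (dev3 S /\<^sub>R \<phi>)) ** U)
      = - (l *\<^sub>R (matrix_inv Cp ** dev3 (SigmaT \<Psi> C Cp) /\<^sub>R \<phi>))" for l \<phi>
    using conj by (simp add: matrix_mult_scaleR_left matrix_mult_scaleR_right)
  have "{- (l *\<^sub>R (matrix_inv Cp ** dev3 (SigmaT \<Psi> C Cp) /\<^sub>R \<phi>)) | l. l \<ge> 0}
      = (\<lambda>X. - (U ** X ** U)) ` {l *\<^sub>R (dev3 S /\<^sub>R \<phi>) | l. l \<ge> 0}" for \<phi>
    unfolding ray[symmetric] by blast
  then show ?thesis
    unfolding Helm_def Ncone_def norm Let_def by simp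
qed

theorem mainTheorem10:
  fixes \<Psi> :: "real^3 \<Rightarrow> real" and r :: real and F Cp :: mat3
  assumes "C1_on {x. \<forall>i. 0 < x$i} \<Psi>"
    and "r > 0"
    and "F \<in> GLplus3"
    and "Cp \<in> PSym3"
  shows "Helm r \<Psi> (transpose F ** F) Cp =
         (\<lambda>X. - (matrix_inv (msqrt Cp) ** X ** matrix_inv (msqrt Cp)))
           ` Ncone r (SigmaR \<Psi> (transpose F ** F) Cp)"
proof -
  have C: "transpose F ** F \<in> PSym3" using Cauchy_Green_PSym3[OF assms(3)] .
  show ?thesis
    using deviatoric_stress_relations[OF assms(1) C assms(4)] by (rule Helm_eq_image_Ncone)
qed

end
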